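(* Let $\tau=\tau_1\ldots\tau_k\in\mathcal{S}_k$ and $0\le j\le k\le n$. The number of involutions $\pi\in\mathcal{S}_n$ that contain $\tau$ as a subsequence and that map exactly $j$ elements of $[k]$ into $[k]$ equals $\binom{n-k}{k-j}t_{n-2k+j}$ if either $j=0$ or the pattern of $\tau_1\ldots\tau_j$ is an involution in $\mathcal{S}_j$, and equals $0$ otherwise.
   Context: $[k]=\{1,\ldots,k\}$. $t_m$ denotes the number of involutions in $\mathcal{S}_m$ ($t_0=1$); when $k-j>n-k$ the binomial coefficient is $0$ and the term is $0$. A permutation $\pi=\pi_1\ldots\pi_n$ contains $\tau$ as a subsequence if there are indices $i_1<\cdots<i_k$ with $\pi_{i_r}=\tau_r$ for all $r$. The pattern of a word of $j$ distinct letters is the word obtained by the order-preserving relabeling of its letters by $[j]$. *)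

theory Defs
  imports "HOL-Combinatorics.Permutations"
begin

text \<open>Permutations of [n] are functions nat => nat that permute {1..n}.\<close>

definition involution :: "(nat \<Rightarrow> nat) \<Rightarrow> bool" where
  "involution p \<longleftrightarrow> p \<circ> p = id"

definition num_inv :: "nat \<Rightarrow> nat" where
  "num_inv m = card {p. p permutes {1..m} \<and> involution p}"

definition contains_subseq :: "nat \<Rightarrow> (nat \<Rightarrow> nat) \<Rightarrow> nat \<Rightarrow> (nat \<Rightarrow> nat) \<Rightarrow> bool" where
  "contains_subseq n p k tau \<longleftrightarrow>
     (\<exists>idx :: nat \<Rightarrow> nat. strict_mono_on {1..k} idx \<and> idx ` {1..k} \<subseteq> {1..n} \<and>
        (\<forall>r\<in>{1..k}. p (idx r) = tau r))"

text \<open>Pattern (order-preserving relabeling by [j]) of the word w_1 ... w_j of distinct letters,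
  extended by the identity outside {1..j}.\<close>
definition pattern :: "nat \<Rightarrow> (nat \<Rightarrow> nat) \<Rightarrow> nat \<Rightarrow> nat" where
  "pattern j w r = (if r \<in> {1..j} then card {s \<in> {1..j}. w s \<le> w r} else r)"

end

theory Submission
  imports Defs
begin

text \<open>
  For an involution p, containing tau as a subsequence just means that p (tau 1) < ... < p (tau k).
  The positions i with p (tau i) in [k] then form an initial segment, necessarily {1..j}, so p maps
  A = {tau 1, ..., tau j} increasingly onto itself. This forces p (tau i) = tau (sigma i) for the
  pattern sigma of tau 1 ... tau j, which is therefore an involution. The letters
  tau (j+1), ..., tau k are sent increasingly onto a (k-j)-subset B of {k+1..n}, and on the
  remaining n + j - 2k points of {k+1..n} - B the map p is an arbitrary involution. Conversely
  every such B and involution q assemble to a counted p, and (B, q) is recovered from p.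
\<close>

section \<open>Involutions\<close>

lemma involution_apply [simp]: "involution p \<Longrightarrow> p (p x) = x"
  unfolding involution_def by (metis comp_apply id_apply)

lemma involutionI: "(\<And>x. p (p x) = x) \<Longrightarrow> involution p"
  unfolding involution_def by auto

lemma involution_imp_inj: "involution p \<Longrightarrow> inj p"
  by (metis involution_apply injI)

lemma involution_permutes:
  assumes "involution p" and "\<And>x. x \<notin> S \<Longrightarrow> p x = x"
  shows "p permutes S"
  unfolding permutes_def using assms by (metis involution_apply)

lemma involution_conj_iff:
  assumes f: "bij_betw f A B" and p: "p permutes A"
  shows "involution (\<lambda>x. if x \<in> B then f (p (inv_into A f x)) else x) \<longleftrightarrow> involution p"
    (is "involution ?q \<longleftrightarrow> _")
proof
  assume q: "involution ?q"
  show "involution p"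
  proof (rule involutionI)
    fix a
    show "p (p a) = a"
    proof (cases "a \<in> A")
      case True
      then have "f a \<in> B" "f (p a) \<in> B" "p a \<in> A" "p (p a) \<in> A"
        using f p by (auto dest: bij_betwE simp: permutes_in_image)
      then have "f (p (p a)) = f a"
        using involution_apply[OF q, of "f a"] f True by (simp add: bij_betw_inv_into_left)
      then show ?thesis
        using f True \<open>p (p a) \<in> A\<close> by (metis bij_betw_inv_into_left)
    qed (use p in \<open>simp add: permutes_not_in\<close>)
  qed
next
  assume p2: "involution p"
  show "involution ?q"
  proof (rule involutionI)
    fix x
    show "?q (?q x) = x"
    proof (cases "x \<in> B")
      case True
      define a where "a = inv_into A f x"
      have "a \<in> A" "f a = x"
        using f True unfolding a_def by (auto simp: bij_betw_inv_into_right bij_betw_def inv_into_into)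
      then have "f (p a) \<in> B" "inv_into A f (f (p a)) = p a"
        using f p by (auto simp: permutes_in_image bij_betw_inv_into_left dest: bij_betwE)
      moreover have "?q x = f (p a)"
        using True unfolding a_def by simp
      ultimately show ?thesis
        using p2 \<open>f a = x\<close> by simp
    qed simp
  qed
qed

lemma card_involutions_permutes:
  assumes "finite C"
  shows "card {p. p permutes C \<and> involution p} = num_inv (card C)"
proof -
  obtain f where f: "bij_betw f {1..card C} C"
    using ex_bij_betw_nat_finite_1[OF assms] by blast
  let ?conj = "\<lambda>p x. if x \<in> C then f (p (inv_into {1..card C} f x)) else x"
  have "bij_betw ?conj {p. p permutes {1..card C}} {p. p permutes C}"
    using f by (rule bij_betw_permutations)
  then have "bij_betw ?conj {p \<in> {p. p permutes {1..card C}}. involution p}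
      {p \<in> {p. p permutes C}. involution p}"
    by (rule bij_betw_Collect) (simp add: involution_conj_iff[OF f])
  then have "bij_betw ?conj {p. p permutes {1..card C} \<and> involution p}
      {p. p permutes C \<and> involution p}"
    by (simp only: mem_Collect_eq)
  then show ?thesis
    unfolding num_inv_def by (rule bij_betw_same_card[symmetric])
qed

section \<open>Ranks in finite sets of natural numbers\<close>

definition rank :: "nat set \<Rightarrow> nat \<Rightarrow> nat" where
  "rank X x = card {y \<in> X. y \<le> x}"

text \<open>For finite X, nth_least X i is the i-th smallest element of X when i is in {1..card X};
  other arguments give unspecified values.\<close>
definition nth_least :: "nat set \<Rightarrow> nat \<Rightarrow> nat" where
  "nth_least X = the_inv_into X (rank X)"

lemma rank_less:
  assumes "finite X" and "y \<in> X" and "x < y"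
  shows "rank X x < rank X y"
proof -
  have "{z \<in> X. z \<le> x} \<subset> {z \<in> X. z \<le> y}"
    using assms by (intro psubsetI) (auto simp: set_eq_iff intro!: exI[of _ y])
  then show ?thesis
    unfolding rank_def using assms(1) by (simp add: psubset_card_mono)
qed

lemma strict_mono_on_rank: "finite X \<Longrightarrow> strict_mono_on X (rank X)"
  by (simp add: strict_mono_onI rank_less)

lemma inj_on_rank: "finite X \<Longrightarrow> inj_on (rank X) X"
  by (rule strict_mono_on_imp_inj_on) (rule strict_mono_on_rank)

lemma rank_image: "finite X \<Longrightarrow> rank X ` X = {1..card X}"
proof -
  assume X: "finite X"
  have "rank X x \<in> {1..card X}" if "x \<in> X" for x
  proof -
    have "0 < rank X x"
      unfolding rank_def using X that by (subst card_gt_0_iff) auto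
    moreover have "rank X x \<le> card X"
      unfolding rank_def using X by (intro card_mono) auto
    ultimately show ?thesis by simp
  qed
  moreover have "card (rank X ` X) = card {1..card X}"
    using card_image[OF inj_on_rank[OF X]] by simp
  ultimately show ?thesis by (intro card_subset_eq) auto
qed

lemma bij_betw_nth_least: "finite X \<Longrightarrow> bij_betw (nth_least X) {1..card X} X"
  unfolding nth_least_def using inj_on_rank rank_image
  by (metis bij_betw_imageI bij_betw_the_inv_into)

lemma nth_least_in: "finite X \<Longrightarrow> i \<in> {1..card X} \<Longrightarrow> nth_least X i \<in> X"
  using bij_betw_nth_least by (metis bij_betwE)

lemma rank_nth_least: "finite X \<Longrightarrow> i \<in> {1..card X} \<Longrightarrow> rank X (nth_least X i) = i"
  unfolding nth_least_def by (metis rank_image inj_on_rank f_the_inv_into_f)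

lemma nth_least_rank: "finite X \<Longrightarrow> x \<in> X \<Longrightarrow> nth_least X (rank X x) = x"
  unfolding nth_least_def by (metis inj_on_rank the_inv_into_f_f)

lemma strict_mono_on_nth_least: "finite X \<Longrightarrow> strict_mono_on {1..card X} (nth_least X)"
  by (rule strict_mono_onI) (metis rank_nth_least nth_least_in rank_less not_less_iff_gr_or_eq)

lemma rank_atLeastAtMost: "i \<in> {a..b} \<Longrightarrow> rank {a..b} i = i + 1 - a"
proof -
  assume "i \<in> {a..b}"
  then have "{y \<in> {a..b}. y \<le> i} = {a..i}" by auto
  then show ?thesis unfolding rank_def by simp
qed

lemma rank_image_strict_mono:
  assumes f: "strict_mono_on S f" and x: "x \<in> S"
  shows "rank (f ` S) (f x) = rank S x"
proof -
  have "{y \<in> f ` S. y \<le> f x} = f ` {z \<in> S. z \<le> x}"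
    using strict_mono_on_leD[OF f] strict_mono_on_less_eq[OF f] x by auto
  moreover have "inj_on f {z \<in> S. z \<le> x}"
    using strict_mono_on_imp_inj_on[OF f] by (rule inj_on_subset) auto
  ultimately show ?thesis
    unfolding rank_def by (simp add: card_image)
qed

lemma strict_mono_on_atLeastAtMost_eq_nth_least:
  assumes "strict_mono_on {a..b} f" and "i \<in> {a..b}"
  shows "f i = nth_least (f ` {a..b}) (i + 1 - a)"
  using rank_image_strict_mono[OF assms] rank_atLeastAtMost[OF assms(2)]
    nth_least_rank[of "f ` {a..b}" "f i"] assms(2) by simp

section \<open>Patterns and subsequences\<close>

lemma pattern_eq_rank:
  assumes "i \<in> {1..j}" and "inj_on w {1..j}"
  shows "pattern j w i = rank (w ` {1..j}) (w i)"
proof -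
  have "{y \<in> w ` {1..j}. y \<le> w i} = w ` {s \<in> {1..j}. w s \<le> w i}" by auto
  moreover have "inj_on w {s \<in> {1..j}. w s \<le> w i}"
    using assms(2) by (rule inj_on_subset) auto
  ultimately show ?thesis
    unfolding pattern_def rank_def using assms(1) by (simp add: card_image)
qed

lemma pattern_in:
  assumes "i \<in> {1..j}" and "inj_on w {1..j}"
  shows "pattern j w i \<in> {1..j}"
proof -
  have "rank (w ` {1..j}) (w i) \<in> rank (w ` {1..j}) ` w ` {1..j}"
    using assms(1) by blast
  then show ?thesis
    using rank_image[of "w ` {1..j}"] card_image[OF assms(2)] assms by (simp add: pattern_eq_rank)
qed

lemma nth_least_pattern:
  assumes "i \<in> {1..j}" and "inj_on w {1..j}"
  shows "nth_least (w ` {1..j}) (pattern j w i) = w i"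
  using nth_least_rank[of "w ` {1..j}" "w i"] assms by (simp add: pattern_eq_rank)

lemma pattern_outside: "i \<notin> {1..j} \<Longrightarrow> pattern j w i = i"
  unfolding pattern_def by (rule if_not_P)

lemma pattern_0: "pattern 0 w = id"
  by (simp add: pattern_def fun_eq_iff)

lemma involution_pattern_permutes: "involution (pattern j w) \<Longrightarrow> pattern j w permutes {1..j}"
  by (rule involution_permutes[OF _ pattern_outside])

lemma contains_subseq_involution_iff:
  assumes "involution p" and "p permutes {1..n}" and "w ` {1..k} \<subseteq> {1..n}"
  shows "contains_subseq n p k w \<longleftrightarrow> strict_mono_on {1..k} (p \<circ> w)"
proof
  assume "contains_subseq n p k w"
  then obtain idx where idx: "strict_mono_on {1..k} idx" "\<forall>r\<in>{1..k}. p (idx r) = w r"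
    unfolding contains_subseq_def by blast
  have "idx r = (p \<circ> w) r" if "r \<in> {1..k}" for r
    using idx(2) that involution_apply[OF assms(1)] by (metis comp_apply)
  then show "strict_mono_on {1..k} (p \<circ> w)"
    using idx(1) by (simp add: strict_mono_on_def)
next
  assume "strict_mono_on {1..k} (p \<circ> w)"
  moreover have "(p \<circ> w) ` {1..k} \<subseteq> {1..n}"
    using assms(2,3) permutes_in_image by fastforce
  ultimately show "contains_subseq n p k w"
    unfolding contains_subseq_def using assms(1) by (intro exI[of _ "p \<circ> w"]) simp
qed

lemma down_closed_eq_atLeastAtMost:
  assumes "M \<subseteq> {1..k}" and "card M = j" and "\<And>i i'. i \<in> M \<Longrightarrow> 1 \<le> i' \<Longrightarrow> i' \<le> i \<Longrightarrow> i' \<in> M"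
  shows "M = {1..j}"
proof -
  have "finite M" using assms(1) finite_subset by blast
  have "M \<subseteq> {1..j}"
  proof
    fix i assume i: "i \<in> M"
    then have "card {1..i} \<le> card M"
      using assms(3) \<open>finite M\<close> by (intro card_mono) auto
    then show "i \<in> {1..j}" using i assms(1,2) by auto
  qed
  then show ?thesis using assms(2) by (intro card_subset_eq) auto
qed

section \<open>Involutions containing a given permutation\<close>

locale involutions_containing =
  fixes n k j :: nat and tau :: "nat \<Rightarrow> nat"
  assumes tau_permutes: "tau permutes {1..k}" and j_le_k: "j \<le> k" and k_le_n: "k \<le> n"
begin

abbreviation "A \<equiv> tau ` {1..j}"
abbreviation "R \<equiv> tau ` {j+1..k}"
abbreviation "U \<equiv> {k+1..n}"

definition admissible :: "(nat \<Rightarrow> nat) \<Rightarrow> bool" where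
  "admissible p \<longleftrightarrow> p permutes {1..n} \<and> involution p \<and> strict_mono_on {1..k} (p \<circ> tau) \<and>
     card {x \<in> {1..k}. p x \<in> {1..k}} = j"

lemma inj_tau: "inj tau"
  using tau_permutes by (rule permutes_inj)

lemma inv_tau [simp]: "inv tau (tau i) = i"
  using inj_tau by simp

lemma tau_in: "i \<in> {1..k} \<Longrightarrow> tau i \<in> {1..k}"
  using permutes_in_image[OF tau_permutes] by blast

lemma A_union_R: "A \<union> R = {1..k}"
proof -
  have "{1..j} \<union> {j+1..k} = {1..k}" using j_le_k by auto
  then show ?thesis using permutes_image[OF tau_permutes] by (metis image_Un)
qed

lemma A_subset: "A \<subseteq> {1..k}" and R_subset: "R \<subseteq> {1..k}"
  using A_union_R by auto

lemma tau_A_iff: "tau i \<in> A \<longleftrightarrow> i \<in> {1..j}"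
  using inj_tau by (auto simp: inj_eq)

lemma inj_on_tau: "inj_on tau X"
  using inj_tau by (rule inj_on_subset) simp

lemma pattern_tau_in: "i \<in> {1..j} \<Longrightarrow> pattern j tau i \<in> {1..j}"
  by (rule pattern_in[OF _ inj_on_tau])

lemma card_A: "card A = j" and card_R: "card R = k - j"
  using inj_tau by (simp_all add: card_image inj_on_subset)

lemma admissible_iff_counted:
  "admissible p \<longleftrightarrow> p permutes {1..n} \<and> involution p \<and> contains_subseq n p k tau \<and>
     card {x \<in> {1..k}. p x \<in> {1..k}} = j"
proof -
  have "tau ` {1..k} \<subseteq> {1..n}"
    using permutes_image[OF tau_permutes] k_le_n by simp
  then show ?thesis
    unfolding admissible_def using contains_subseq_involution_iff by blast
qed

context
  fixes p assumes adm: "admissible p"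
begin

lemma admissible_permutes: "p permutes {1..n}"
  and admissible_involution: "involution p"
  and admissible_strict_mono: "strict_mono_on {1..k} (p \<circ> tau)"
  and admissible_card_inside: "card {x \<in> {1..k}. p x \<in> {1..k}} = j"
  using adm by (simp_all only: admissible_def)

lemma admissible_apply_apply [simp]: "p (p x) = x"
  using admissible_involution by (rule involution_apply)

lemma inj_admissible: "inj p"
  using admissible_involution by (rule involution_imp_inj)

lemma admissible_in: "x \<in> {1..n} \<Longrightarrow> p x \<in> {1..n}"
  using admissible_permutes by (simp only: permutes_in_image)

lemma admissible_strict_mono_on: "S \<subseteq> {1..k} \<Longrightarrow> strict_mono_on S (p \<circ> tau)"
  using admissible_strict_mono by (rule monotone_on_subset)

lemma admissible_less: "i \<in> {1..k} \<Longrightarrow> i' \<in> {1..k} \<Longrightarrow> i < i' \<Longrightarrow> p (tau i) < p (tau i')"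
  using admissible_strict_mono_on[OF order_refl] by (simp add: strict_mono_on_def)

text \<open>An initial segment, because p \<circ> tau is increasing and takes positive values.\<close>
lemma admissible_positions_inside: "{i \<in> {1..k}. p (tau i) \<in> {1..k}} = {1..j}"
proof (rule down_closed_eq_atLeastAtMost)
  let ?M = "{i \<in> {1..k}. p (tau i) \<in> {1..k}}"
  show "?M \<subseteq> {1..k}" by auto
  have "card ?M = card (tau ` ?M)"
    by (simp add: card_image inj_on_tau)
  also have "tau ` ?M = {x \<in> tau ` {1..k}. p x \<in> {1..k}}" by auto
  also have "\<dots> = {x \<in> {1..k}. p x \<in> {1..k}}"
    by (simp only: permutes_image[OF tau_permutes])
  finally show "card ?M = j"
    using admissible_card_inside by simp
  fix i i' assume i: "i \<in> ?M" and "1 \<le> i'" "i' \<le> i"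
  then have "p (tau i') \<le> p (tau i)"
    using admissible_less by (cases "i' = i") (auto intro: less_imp_le)
  moreover have "p (tau i') \<in> {1..n}"
  proof -
    have "tau i' \<in> {1..k}" using tau_in i \<open>1 \<le> i'\<close> \<open>i' \<le> i\<close> by simp
    then show ?thesis using admissible_in k_le_n by simp
  qed
  moreover have "i \<le> k" "p (tau i) \<le> k" using i by auto
  ultimately show "i' \<in> ?M" using \<open>1 \<le> i'\<close> \<open>i' \<le> i\<close> by simp
qed

lemma admissible_inside_iff: "i \<in> {1..k} \<Longrightarrow> p (tau i) \<in> {1..k} \<longleftrightarrow> i \<in> {1..j}"
  using admissible_positions_inside by (metis (no_types, lifting) mem_Collect_eq)

lemma admissible_image_A: "p ` A = A"
proof (rule endo_inj_surj)
  show "p ` A \<subseteq> A"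
  proof
    fix y assume "y \<in> p ` A"
    then obtain i where i: "i \<in> {1..j}" "y = p (tau i)" by blast
    have ik: "i \<in> {1..k}" using i(1) j_le_k by simp
    then have "y \<in> tau ` {1..k}"
      using i admissible_inside_iff by (simp only: permutes_image[OF tau_permutes])
    then obtain m where m: "m \<in> {1..k}" "y = tau m" by blast
    have "p (tau m) = tau i" using i(2) m(2) by (metis admissible_apply_apply)
    then have "p (tau m) \<in> {1..k}" using ik by (simp only: tau_in)
    then have "m \<in> {1..j}" using m(1) admissible_inside_iff by blast
    then show "y \<in> A" using m(2) by blast
  qed
next
  show "inj_on p A" using inj_admissible by (rule inj_on_subset) simp
qed simp

lemma admissible_R_outside: "i \<in> {j+1..k} \<Longrightarrow> p (tau i) \<in> U"
proof -
  assume i: "i \<in> {j+1..k}"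
  then have ik: "i \<in> {1..k}" by simp
  then have "p (tau i) \<in> {1..n}"
    using tau_in[OF ik] k_le_n admissible_in by simp
  moreover have "p (tau i) \<notin> {1..k}"
    using admissible_inside_iff[OF ik] i by simp
  ultimately show ?thesis by simp
qed

lemma admissible_on_A: "i \<in> {1..j} \<Longrightarrow> p (tau i) = tau (pattern j tau i)"
proof -
  assume i: "i \<in> {1..j}"
  have "strict_mono_on {1..j} (p \<circ> tau)"
    by (rule admissible_strict_mono_on) (use j_le_k in auto)
  moreover have "(p \<circ> tau) ` {1..j} = A"
    using admissible_image_A by (simp only: image_comp)
  ultimately have on_A: "p (tau m) = nth_least A m" if "m \<in> {1..j}" for m
    using strict_mono_on_atLeastAtMost_eq_nth_least[of 1 j "p \<circ> tau" m] that by simp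
  have "pattern j tau i \<in> {1..j}"
    using i by (rule pattern_tau_in)
  then have "p (tau (pattern j tau i)) = nth_least A (pattern j tau i)"
    by (rule on_A)
  also have "\<dots> = tau i"
    using i inj_on_tau by (rule nth_least_pattern)
  finally have "p (p (tau (pattern j tau i))) = p (tau i)" by (rule arg_cong)
  then show ?thesis by simp
qed

lemma admissible_on_R: "i \<in> {j+1..k} \<Longrightarrow> p (tau i) = nth_least (p ` R) (i - j)"
proof -
  assume i: "i \<in> {j+1..k}"
  have "strict_mono_on {j+1..k} (p \<circ> tau)"
    by (rule admissible_strict_mono_on) auto
  moreover have "(p \<circ> tau) ` {j+1..k} = p ` R"
    by (simp only: image_comp)
  ultimately show ?thesis
    using strict_mono_on_atLeastAtMost_eq_nth_least[of "j+1" k "p \<circ> tau" i] i by simp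
qed

lemma admissible_maps_U_diff: "x \<in> U - p ` R \<Longrightarrow> p x \<in> U - p ` R"
proof -
  assume x: "x \<in> U - p ` R"
  then have "x \<notin> {1..k}" by auto
  have "p x \<notin> A"
  proof
    assume "p x \<in> A"
    then have "p (p x) \<in> A" using admissible_image_A by blast
    then show False using \<open>x \<notin> {1..k}\<close> A_subset by auto
  qed
  moreover have "p x \<notin> R" using x by (metis Diff_iff admissible_apply_apply imageI)
  moreover have "p x \<notin> p ` R"
    using x R_subset \<open>x \<notin> {1..k}\<close> inj_admissible by (auto simp: inj_eq)
  moreover have "p x \<in> {1..n}" using x admissible_in by auto
  ultimately show "p x \<in> U - p ` R" using A_union_R by auto
qed

lemma admissible_involution_pattern: "involution (pattern j tau)"
proof (rule involutionI)
  fix i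
  show "pattern j tau (pattern j tau i) = i"
  proof (cases "i \<in> {1..j}")
    case True
    then have "pattern j tau i \<in> {1..j}"
      by (rule pattern_tau_in)
    then have "tau (pattern j tau (pattern j tau i)) = p (tau (pattern j tau i))"
      by (rule admissible_on_A[symmetric])
    also have "\<dots> = p (p (tau i))"
      by (simp only: admissible_on_A[OF True])
    also have "\<dots> = tau i" by simp
    finally have "tau (pattern j tau (pattern j tau i)) = tau i" .
    then show ?thesis using inj_tau by (simp add: inj_eq)
  next
    case False
    then show ?thesis using pattern_outside[OF False] by simp
  qed
qed

end

definition parameters :: "(nat set \<times> (nat \<Rightarrow> nat)) set" where
  "parameters = (SIGMA B:{B. B \<subseteq> U \<and> card B = k - j}. {q. q permutes U - B \<and> involution q})"

definition assemble :: "nat set \<Rightarrow> (nat \<Rightarrow> nat) \<Rightarrow> nat \<Rightarrow> nat" where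
  "assemble B q x =
     (if x \<in> A then tau (pattern j tau (inv tau x))
      else if x \<in> R then nth_least B (inv tau x - j)
      else if x \<in> B then tau (rank B x + j)
      else q x)"

lemma assemble_A: "i \<in> {1..j} \<Longrightarrow> assemble B q (tau i) = tau (pattern j tau i)"
  by (simp add: assemble_def)

lemma assemble_R: "i \<in> {j+1..k} \<Longrightarrow> assemble B q (tau i) = nth_least B (i - j)"
  using tau_A_iff[of i] by (simp add: assemble_def)

lemma assemble_B:
  assumes "B \<subseteq> U" and "x \<in> B"
  shows "assemble B q x = tau (rank B x + j)"
proof -
  have "x \<notin> {1..k}" using assms by auto
  then have "x \<notin> A" "x \<notin> R" using A_subset R_subset by blast+
  then show ?thesis using assms(2) by (simp add: assemble_def)
qed

lemma assemble_other:
  assumes "x \<notin> {1..k}" and "x \<notin> B"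
  shows "assemble B q x = q x"
proof -
  have "x \<notin> A" "x \<notin> R" using assms(1) A_subset R_subset by blast+
  then show ?thesis using assms(2) by (simp add: assemble_def)
qed

context
  fixes B assumes B_subset: "B \<subseteq> U" and card_B: "card B = k - j"
begin

lemma finite_B: "finite B"
  using B_subset finite_subset by blast

lemma nth_least_B_in: "i \<in> {1..k-j} \<Longrightarrow> nth_least B i \<in> B"
  using nth_least_in[OF finite_B] card_B by simp

lemma rank_B_in: "x \<in> B \<Longrightarrow> rank B x \<in> {1..k-j}"
  using rank_image[OF finite_B] card_B by (metis imageI)

lemma assemble_image_R: "assemble B q ` R = B"
proof (intro equalityI subsetI)
  fix y assume "y \<in> assemble B q ` R"
  then obtain i where i: "i \<in> {j+1..k}" "y = assemble B q (tau i)" by blast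
  then have "i - j \<in> {1..k-j}" by auto
  then show "y \<in> B" using i nth_least_B_in by (simp add: assemble_R)
next
  fix y assume y: "y \<in> B"
  then have i: "rank B y + j \<in> {j+1..k}" using rank_B_in j_le_k by fastforce
  have "y = assemble B q (tau (rank B y + j))"
    using assemble_R[OF i] nth_least_rank[OF finite_B y] by simp
  then show "y \<in> assemble B q ` R" using i by blast
qed

context
  fixes q assumes pattern_involution: "involution (pattern j tau)"
    and q_permutes: "q permutes U - B" and q_involution: "involution q"
begin

lemma assemble_A_nth_least: "i \<in> {1..j} \<Longrightarrow> assemble B q (tau i) = nth_least A i"
proof -
  assume i: "i \<in> {1..j}"
  have "pattern j tau i \<in> {1..j}" using i by (rule pattern_tau_in)
  then have "nth_least A (pattern j tau (pattern j tau i)) = tau (pattern j tau i)"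
    using inj_on_tau by (rule nth_least_pattern)
  then show ?thesis
    using i pattern_involution by (simp add: assemble_A)
qed

lemma q_maps_outside: "x \<notin> {1..k} \<Longrightarrow> x \<notin> B \<Longrightarrow> q x \<notin> {1..k} \<and> q x \<notin> B"
  using permutes_in_image[OF q_permutes, of x] permutes_not_in[OF q_permutes, of x] by auto

lemma involution_assemble: "involution (assemble B q)"
proof (rule involutionI)
  fix x
  consider (A) i where "i \<in> {1..j}" "x = tau i" | (R) i where "i \<in> {j+1..k}" "x = tau i"
    | (B) "x \<in> B" | (other) "x \<notin> {1..k}" "x \<notin> B"
    using A_union_R by blast
  then show "assemble B q (assemble B q x) = x"
  proof cases
    case A
    then show ?thesis
      using pattern_tau_in[of i] pattern_involution by (simp add: assemble_A)
  next
    case R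
    then have ij: "i - j \<in> {1..k-j}" by auto
    have "assemble B q x = nth_least B (i - j)"
      using R by (simp add: assemble_R)
    moreover have "rank B (nth_least B (i - j)) = i - j"
      using rank_nth_least[OF finite_B] card_B ij by simp
    ultimately show ?thesis
      using R assemble_B[OF B_subset nth_least_B_in[OF ij]] by simp
  next
    case B
    then have x_rank: "rank B x + j \<in> {j+1..k}" using rank_B_in j_le_k by fastforce
    have "assemble B q (assemble B q x) = assemble B q (tau (rank B x + j))"
      using assemble_B[OF B_subset B] by simp
    also have "\<dots> = nth_least B (rank B x)"
      using assemble_R[OF x_rank] by simp
    also have "\<dots> = x"
      using nth_least_rank[OF finite_B B] .
    finally show ?thesis .
  next
    case other
    then show ?thesis
      using q_maps_outside[OF other] q_involution by (simp add: assemble_other)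
  qed
qed

lemma assemble_fixes: "x \<notin> {1..n} \<Longrightarrow> assemble B q x = x"
proof -
  assume x: "x \<notin> {1..n}"
  then have "x \<notin> {1..k}" "x \<notin> B" "x \<notin> U - B" using B_subset k_le_n by auto
  then show ?thesis using permutes_not_in[OF q_permutes \<open>x \<notin> U - B\<close>] by (simp add: assemble_other)
qed

lemma strict_mono_on_assemble: "strict_mono_on {1..k} (assemble B q \<circ> tau)"
proof (rule strict_mono_onI)
  fix r s assume r: "r \<in> {1..k}" and s: "s \<in> {1..k}" and "r < s"
  show "(assemble B q \<circ> tau) r < (assemble B q \<circ> tau) s"
  proof (cases "s \<le> j")
    case True
    then show ?thesis
      using r s \<open>r < s\<close> strict_mono_on_nth_least[of A] card_A
      by (simp add: assemble_A_nth_least strict_mono_on_def)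
  next
    case False
    then have s': "s \<in> {j+1..k}" "s - j \<in> {1..k-j}" using s by auto
    show ?thesis
    proof (cases "r \<le> j")
      case True
      then have "assemble B q (tau r) \<in> {1..k}"
        using r nth_least_in[of A r] card_A A_subset by (auto simp: assemble_A_nth_least)
      moreover have "assemble B q (tau s) \<in> B"
        using assemble_R[OF s'(1)] nth_least_B_in[OF s'(2)] by simp
      then have "assemble B q (tau s) \<in> U"
        using B_subset by blast
      ultimately show ?thesis by simp
    next
      case False
      then have "r - j \<in> {1..k-j}" "r - j < s - j" using r s \<open>r < s\<close> by auto
      then show ?thesis
        using s' strict_mono_on_nth_least[OF finite_B] card_B False r
        by (simp add: assemble_R strict_mono_on_def)
    qed
  qed
qed

lemma assemble_inside: "{x \<in> {1..k}. assemble B q x \<in> {1..k}} = A"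
proof -
  have "assemble B q x \<in> {1..k}" if "x \<in> A" for x
  proof -
    obtain i where i: "i \<in> {1..j}" "x = tau i" using \<open>x \<in> A\<close> by blast
    then have "pattern j tau i \<in> {1..k}" using pattern_tau_in j_le_k by fastforce
    then show ?thesis using i tau_in by (simp only: assemble_A)
  qed
  moreover have "assemble B q x \<notin> {1..k}" if "x \<in> R" for x
  proof -
    obtain i where i: "i \<in> {j+1..k}" "x = tau i" using \<open>x \<in> R\<close> by blast
    then have "i - j \<in> {1..k-j}" by auto
    then have "assemble B q x \<in> B" using i nth_least_B_in by (simp add: assemble_R)
    then show ?thesis using B_subset by auto
  qed
  ultimately show ?thesis
    using A_union_R A_subset by (auto simp del: atLeastAtMost_iff)
qed

lemma admissible_assemble: "admissible (assemble B q)"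
proof -
  have "assemble B q permutes {1..n}"
    by (rule involution_permutes[OF involution_assemble]) (rule assemble_fixes)
  then show ?thesis
    unfolding admissible_def
    using involution_assemble strict_mono_on_assemble assemble_inside card_A by simp
qed

end

end

lemma mem_parameters:
  "(B, q) \<in> parameters \<longleftrightarrow> B \<subseteq> U \<and> card B = k - j \<and> q permutes U - B \<and> involution q"
  by (simp add: parameters_def)

lemma inj_on_assemble: "inj_on (case_prod assemble) parameters"
proof (rule inj_onI)
  fix Bq Bq' assume Bq: "Bq \<in> parameters" and Bq': "Bq' \<in> parameters"
    and eq: "case_prod assemble Bq = case_prod assemble Bq'"
  obtain B q B' q' where defs: "Bq = (B, q)" "Bq' = (B', q')" by fastforce
  then have P: "(B, q) \<in> parameters" "(B', q') \<in> parameters"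
    and assemble_eq: "assemble B q = assemble B' q'"
    using Bq Bq' eq by simp_all
  have "B = assemble B q ` R"
    by (rule assemble_image_R[symmetric]) (use P(1) in \<open>simp_all add: mem_parameters\<close>)
  also have "\<dots> = B'"
    unfolding assemble_eq
    by (rule assemble_image_R) (use P(2) in \<open>simp_all add: mem_parameters\<close>)
  finally have "B = B'" .
  have "q x = q' x" for x
  proof (cases "x \<in> {1..k} \<union> B")
    case True
    then have "x \<notin> U - B" "x \<notin> U - B'" using \<open>B = B'\<close> by auto
    moreover have "q permutes U - B" "q' permutes U - B'"
      using P by (simp_all add: mem_parameters)
    ultimately show ?thesis by (simp add: permutes_not_in)
  next
    case False
    then have "q x = assemble B q x" "q' x = assemble B' q' x"
      using \<open>B = B'\<close> by (simp_all add: assemble_other)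
    then show ?thesis using assemble_eq by simp
  qed
  then show "Bq = Bq'" using defs \<open>B = B'\<close> by auto
qed

definition residual :: "(nat \<Rightarrow> nat) \<Rightarrow> nat \<Rightarrow> nat" where
  "residual p x = (if x \<in> U - p ` R then p x else x)"

context
  fixes p assumes adm: "admissible p"
begin

lemma admissible_parameters: "(p ` R, residual p) \<in> parameters"
proof -
  have "p ` R \<subseteq> U"
    using admissible_R_outside[OF adm] by blast
  moreover have "card (p ` R) = k - j"
    using inj_admissible[OF adm] card_R by (simp add: card_image inj_on_subset)
  moreover have "involution (residual p)"
    unfolding residual_def using admissible_maps_U_diff adm by (intro involutionI) auto
  moreover have "residual p permutes U - p ` R"
    using \<open>involution (residual p)\<close> by (rule involution_permutes) (auto simp: residual_def)
  ultimately show ?thesis by (simp add: mem_parameters)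
qed

lemma admissible_eq_assemble: "p = assemble (p ` R) (residual p)"
proof -
  define B where "B = p ` R"
  have B_subset: "B \<subseteq> U" and card_B: "card B = k - j"
    using admissible_parameters unfolding B_def by (simp_all add: mem_parameters)
  have "p x = assemble B (residual p) x" for x
  proof -
    consider (A) i where "i \<in> {1..j}" "x = tau i" | (R) i where "i \<in> {j+1..k}" "x = tau i"
      | (B) i where "i \<in> {j+1..k}" "x = p (tau i)" | (other) "x \<notin> {1..k}" "x \<notin> B"
      using A_union_R unfolding B_def by blast
    then show ?thesis
    proof cases
      case A
      then show ?thesis using admissible_on_A[OF adm] by (simp add: assemble_A)
    next
      case R
      then show ?thesis using admissible_on_R[OF adm] by (simp add: assemble_R B_def)
    next
      case B
      then have x: "x = nth_least B (i - j)" "i - j \<in> {1..k-j}"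
        using admissible_on_R[OF adm] unfolding B_def by auto
      then have "x \<in> B" using nth_least_B_in[OF B_subset card_B] by simp
      have "rank B x = i - j"
        using x rank_nth_least[OF finite_B[OF B_subset card_B]] card_B by simp
      then have "assemble B (residual p) x = tau i"
        using assemble_B[OF B_subset \<open>x \<in> B\<close>] B(1) by simp
      then show ?thesis using B(2) adm by simp
    next
      case other
      then show ?thesis
        using admissible_permutes[OF adm]
        by (auto simp: assemble_other residual_def B_def permutes_not_in)
    qed
  qed
  then show ?thesis unfolding B_def by blast
qed

end

lemma admissible_eq_image_assemble:
  assumes "involution (pattern j tau)"
  shows "Collect admissible = case_prod assemble ` parameters"
proof (intro equalityI subsetI)
  fix p assume "p \<in> Collect admissible"
  then have "p = case_prod assemble (p ` R, residual p)" "(p ` R, residual p) \<in> parameters"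
    using admissible_eq_assemble admissible_parameters by simp_all
  then show "p \<in> case_prod assemble ` parameters" by (rule image_eqI)
next
  fix p assume "p \<in> case_prod assemble ` parameters"
  then obtain B q where "(B, q) \<in> parameters" "p = assemble B q" by auto
  then show "p \<in> Collect admissible"
    using admissible_assemble assms by (simp add: mem_parameters)
qed

lemma card_parameters: "card parameters = ((n - k) choose (k - j)) * num_inv (n + j - 2 * k)"
proof -
  let ?Bs = "{B. B \<subseteq> U \<and> card B = k - j}"
  have "card parameters = (\<Sum>B\<in>?Bs. card {q. q permutes U - B \<and> involution q})"
    unfolding parameters_def
    by (rule card_SigmaI) (auto intro: finite_subset[OF _ finite_permutations])
  also have "\<dots> = (\<Sum>B\<in>?Bs. num_inv (n + j - 2 * k))"
  proof (rule sum.cong[OF refl])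
    fix B assume B: "B \<in> ?Bs"
    then have "card (U - B) = card U - card B"
      by (intro card_Diff_subset) (auto intro: finite_subset)
    then have "card (U - B) = n + j - 2 * k"
      using B j_le_k k_le_n by simp
    then show "card {q. q permutes U - B \<and> involution q} = num_inv (n + j - 2 * k)"
      using card_involutions_permutes[of "U - B"] by simp
  qed
  also have "\<dots> = ((n - k) choose (k - j)) * num_inv (n + j - 2 * k)"
    using n_subsets[of U "k - j"] by simp
  finally show ?thesis .
qed

lemma card_admissible:
  assumes "involution (pattern j tau)"
  shows "card (Collect admissible) = ((n - k) choose (k - j)) * num_inv (n + j - 2 * k)"
  using admissible_eq_image_assemble[OF assms] card_image[OF inj_on_assemble] card_parameters
  by simp

end

theorem mainTheorem2:
  fixes n k j :: nat and tau :: "nat \<Rightarrow> nat"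
  assumes "tau permutes {1..k}" and "j \<le> k" and "k \<le> n"
  shows "card {p. p permutes {1..n} \<and> involution p \<and> contains_subseq n p k tau \<and>
                  card {x \<in> {1..k}. p x \<in> {1..k}} = j}
         = (if j = 0 \<or> (pattern j tau permutes {1..j} \<and> involution (pattern j tau))
            then ((n - k) choose (k - j)) * num_inv (n + j - 2 * k) else 0)"
proof -
  interpret involutions_containing n k j tau
    using assms by unfold_locales
  have counted: "{p. p permutes {1..n} \<and> involution p \<and> contains_subseq n p k tau \<and>
                  card {x \<in> {1..k}. p x \<in> {1..k}} = j} = Collect admissible"
    using admissible_iff_counted by blast
  have condition: "j = 0 \<or> (pattern j tau permutes {1..j} \<and> involution (pattern j tau))
      \<longleftrightarrow> involution (pattern j tau)"
    using pattern_0 involution_pattern_permutes by (auto simp: involution_def)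
  show ?thesis
  proof (cases "involution (pattern j tau)")
    case True
    then show ?thesis unfolding counted condition by (simp add: card_admissible)
  next
    case False
    then have "Collect admissible = {}" using admissible_involution_pattern by blast
    then show ?thesis unfolding counted condition using False by (simp del: Collect_empty_eq)
  qed
qed

end
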